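(* Let $K$ be a causal poset with a symmetry group $S$. Then $K$ has a covariant path-frame system if and only if for every pair $o,a\in K$ there is a path joining $a$ to $o$ all of whose generating 1-simplices are invariant under $S_a\cap S_o$.
   Context: A causal poset is a pathwise connected poset $(K,\le)$ with an irreflexive symmetric relation $\perp$ satisfying $o\perp a,\ \tilde o\le o\Rightarrow\tilde o\perp a$; a symmetry group $S$ is a group of bijections of $K$ preserving $\le$ and $\perp$ in both directions; $S_a=\{s\in S:s(a)=a\}$ is the stabilizer of $a$. A 1-simplex is $b=(|b|;\partial_0b,\partial_1b)$ with $\partial_0b,\partial_1b\le|b|$, opposite $\overline b=(|b|;\partial_1b,\partial_0b)$, and $s\in S$ acts by $s(b)=(s(|b|);s(\partial_0b),s(\partial_1b))$; $b$ is invariant under a subgroup $H$ if $s(b)=b$ for all $s\in H$. $\mathrm T_1(K)$: 1-simplices with $\partial_0b\ne|b|\ne\partial_1b$. $\mathrm F(K)$: group generated by $\mathrm T_1(K)$ with $b^{-1}=\overline b$; $S$ acts on words letterwise. A path from $a$ to $o$ is a word $b_n\cdots b_1$ ($b_i\in\mathrm T_1(K)$, possibly empty when $a=o$) with $\partial_1b_1=a$, $\partial_0b_n=o$, $\partial_0b_i=\partial_1b_{i+1}$. A path-frame $P_o$ over a pole $o\in K$ is a choice, for every $a\in K$, of a path $p_{(o,a)}$ from $o$ to $a$, with $p_{(o,o)}=1$ (the empty word). A covariant path-frame system is a family $\{P_o:o\in K\}$ of path-frames such that $s(p_{(a,x)})=p_{(s(a),s(x))}$ for all $a,x\in K$, $s\in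 S$. *)

theory Defs
  imports Main
begin

text \<open>The poset K is the carrier type 'a with its order; 1-simplices are records
  (support, boundary 0, boundary 1).\<close>

record 'a simplex1 =
  supp :: 'a
  bd0  :: 'a
  bd1  :: 'a

definition is_simplex1 :: "'a::order simplex1 \<Rightarrow> bool" where
  "is_simplex1 b \<longleftrightarrow> bd0 b \<le> supp b \<and> bd1 b \<le> supp b"

definition opp :: "'a simplex1 \<Rightarrow> 'a simplex1" where
  "opp b = \<lparr>supp = supp b, bd0 = bd1 b, bd1 = bd0 b\<rparr>"

definition act :: "('a \<Rightarrow> 'a) \<Rightarrow> 'a simplex1 \<Rightarrow> 'a simplex1" where
  "act s b = \<lparr>supp = s (supp b), bd0 = s (bd0 b), bd1 = s (bd1 b)\<rparr>"

definition T1 :: "'a::order simplex1 \<Rightarrow> bool" where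
  "T1 b \<longleftrightarrow> is_simplex1 b \<and> bd0 b \<noteq> supp b \<and> supp b \<noteq> bd1 b"

text \<open>A path b_n ... b_1 from a to z is represented by the list [b_1, ..., b_n].\<close>
fun is_path :: "'a::order \<Rightarrow> 'a \<Rightarrow> 'a simplex1 list \<Rightarrow> bool" where
  "is_path a z [] \<longleftrightarrow> a = z"
| "is_path a z (b # bs) \<longleftrightarrow> T1 b \<and> bd1 b = a \<and> is_path (bd0 b) z bs"

definition pathwise_connected :: "'a::order itself \<Rightarrow> bool" where
  "pathwise_connected _ \<longleftrightarrow> (\<forall>(a::'a) z. \<exists>p. is_path a z p)"

definition causal_poset :: "('a::order \<Rightarrow> 'a \<Rightarrow> bool) \<Rightarrow> bool" where
  "causal_poset perp \<longleftrightarrow> pathwise_connected TYPE('a)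
     \<and> (\<forall>a. \<not> perp a a) \<and> (\<forall>a b. perp a b \<longrightarrow> perp b a)
     \<and> (\<forall>z a z'. perp z a \<and> z' \<le> z \<longrightarrow> perp z' a)"

definition symmetry_group :: "('a::order \<Rightarrow> 'a \<Rightarrow> bool) \<Rightarrow> ('a \<Rightarrow> 'a) set \<Rightarrow> bool" where
  "symmetry_group perp S \<longleftrightarrow>
     id \<in> S \<and> (\<forall>s\<in>S. \<forall>t\<in>S. s \<circ> t \<in> S)
     \<and> (\<forall>s\<in>S. bij s \<and> inv s \<in> S)
     \<and> (\<forall>s\<in>S. \<forall>x y. (s x \<le> s y \<longleftrightarrow> x \<le> y) \<and> (perp (s x) (s y) \<longleftrightarrow> perp x y))"

definition stabilizer :: "('a \<Rightarrow> 'a) set \<Rightarrow> 'a \<Rightarrow> ('a \<Rightarrow> 'a) set" where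
  "stabilizer S a = {s \<in> S. s a = a}"

definition invariant_under :: "('a \<Rightarrow> 'a) set \<Rightarrow> 'a simplex1 \<Rightarrow> bool" where
  "invariant_under H b \<longleftrightarrow> (\<forall>s\<in>H. act s b = b)"

text \<open>A covariant path-frame system: p z a is the path p_(z,a) of the frame P_o.\<close>
definition covariant_path_frame_system ::
  "('a::order \<Rightarrow> 'a) set \<Rightarrow> ('a \<Rightarrow> 'a \<Rightarrow> 'a simplex1 list) \<Rightarrow> bool" where
  "covariant_path_frame_system S p \<longleftrightarrow>
     (\<forall>z a. is_path z a (p z a)) \<and> (\<forall>z. p z z = [])
     \<and> (\<forall>s\<in>S. \<forall>a x. map (act s) (p a x) = p (s a) (s x))"

end

theory Submission
  imports Defs
begin

text \<open>Necessity: a covariant frame path from a to z is mapped to itself by every symmetry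
  fixing a and z, hence so is each of its 1-simplices. Sufficiency: choose one invariant path
  for a representative of each S-orbit of pairs and transport it by a symmetry. Two symmetries
  transporting the representative to the same pair differ by an element of the joint stabilizer,
  which fixes the chosen path; this makes the transported paths well defined and covariant.\<close>

lemma act_comp: "act (s \<circ> t) b = act s (act t b)"
  by (simp add: act_def)

lemma is_path_map_act:
  assumes "\<And>x y. s x \<le> s y \<longleftrightarrow> x \<le> y" and "inj s" and "is_path x y q"
  shows "is_path (s x) (s y) (map (act s) q)"
  using assms(3)
proof (induction q arbitrary: x)
  case Nil
  then show ?case by simp
next
  case (Cons b bs)
  then have "T1 (act s b)"
    using assms(1,2) by (auto simp: T1_def is_simplex1_def act_def inj_eq)
  with Cons show ?case by (auto simp: act_def)
qed

lemma covariant_path_frame_system_invariant: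
  assumes "covariant_path_frame_system S p" and "b \<in> set (p a z)"
  shows "invariant_under (stabilizer S a \<inter> stabilizer S z) b"
  unfolding invariant_under_def
proof
  fix s assume "s \<in> stabilizer S a \<inter> stabilizer S z"
  then have "map (act s) (p a z) = p a z"
    using assms(1) by (auto simp: covariant_path_frame_system_def stabilizer_def)
  then show "act s b = b"
    using assms(2) by (metis map_eq_conv map_ident)
qed

context
  fixes perp :: "'a::order \<Rightarrow> 'a \<Rightarrow> bool" and S :: "('a \<Rightarrow> 'a) set"
  assumes sym_group: "symmetry_group perp S"
begin

lemma symmetry_comp_closed: "s \<in> S \<Longrightarrow> t \<in> S \<Longrightarrow> s \<circ> t \<in> S"
  and symmetry_inv_closed: "s \<in> S \<Longrightarrow> inv s \<in> S"
  and symmetry_bij: "s \<in> S \<Longrightarrow> bij s"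
  and symmetry_order_iff: "s \<in> S \<Longrightarrow> s x \<le> s y \<longleftrightarrow> x \<le> y"
  using sym_group by (auto simp: symmetry_group_def)

lemma symmetry_inv_apply: "s \<in> S \<Longrightarrow> inv s (s x) = x"
  by (simp add: symmetry_bij bij_is_inj)

lemma symmetry_apply_inv: "s \<in> S \<Longrightarrow> s \<circ> inv s = id"
  by (meson symmetry_bij bij_is_surj surj_iff)

definition pair_orbit :: "'a \<Rightarrow> 'a \<Rightarrow> ('a \<times> 'a) set" where
  "pair_orbit x y = {(s x, s y) |s. s \<in> S}"

lemma pair_orbit_self: "(x, y) \<in> pair_orbit x y"
  using sym_group unfolding pair_orbit_def symmetry_group_def by force

lemma pair_orbit_transporter:
  assumes "r \<in> pair_orbit x y"
  obtains t where "t \<in> S" "t (fst r) = x" "t (snd r) = y"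
proof -
  from assms obtain s where "s \<in> S" "r = (s x, s y)"
    by (auto simp: pair_orbit_def)
  then show thesis
    using that[of "inv s"] by (simp add: symmetry_inv_closed symmetry_inv_apply)
qed

lemma pair_orbit_apply:
  assumes s: "s \<in> S"
  shows "pair_orbit (s x) (s y) = pair_orbit x y"
proof
  show "pair_orbit (s x) (s y) \<subseteq> pair_orbit x y"
    unfolding pair_orbit_def using symmetry_comp_closed[OF _ s] by (force simp: comp_def)
  show "pair_orbit x y \<subseteq> pair_orbit (s x) (s y)"
  proof
    fix r assume "r \<in> pair_orbit x y"
    then obtain t where t: "t \<in> S" "r = (t x, t y)"
      by (auto simp: pair_orbit_def)
    have "t \<circ> inv s \<in> S" "(t \<circ> inv s) (s x) = t x" "(t \<circ> inv s) (s y) = t y"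
      using t(1) s by (simp_all add: symmetry_comp_closed symmetry_inv_closed symmetry_inv_apply)
    then show "r \<in> pair_orbit (s x) (s y)"
      unfolding pair_orbit_def t(2) by (metis (mono_tags, lifting) mem_Collect_eq)
  qed
qed

lemma transport_invariant_path:
  assumes "s \<in> S" "t \<in> S" "t' \<in> S"
    and "s (t x) = t' x" "s (t y) = t' y"
    and inv: "\<forall>b\<in>set q. invariant_under (stabilizer S x \<inter> stabilizer S y) b"
  shows "map (act s) (map (act t) q) = map (act t') q"
proof -
  let ?u = "inv t' \<circ> s \<circ> t"
  have "?u \<in> stabilizer S x \<inter> stabilizer S y"
    using assms(1-5)
    by (simp add: stabilizer_def symmetry_comp_closed symmetry_inv_closed symmetry_inv_apply)
  then have fixed: "act ?u b = b" if "b \<in> set q" for b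
    using inv that by (auto simp: invariant_under_def)
  have "act s (act t b) = act t' b" if "b \<in> set q" for b
  proof -
    have "act s (act t b) = act ((t' \<circ> inv t') \<circ> s \<circ> t) b"
      using symmetry_apply_inv[OF assms(3)] by (simp add: act_comp)
    also have "\<dots> = act t' (act ?u b)"
      by (simp add: act_comp comp_assoc)
    finally show ?thesis
      using fixed[OF that] by simp
  qed
  then show ?thesis by simp
qed

lemma covariant_path_frame_system_exists:
  assumes paths: "\<forall>x y. \<exists>q. is_path x y q \<and>
      (\<forall>b\<in>set q. invariant_under (stabilizer S x \<inter> stabilizer S y) b)"
  shows "\<exists>p. covariant_path_frame_system S p"
proof -
  have "\<forall>x y. \<exists>q. is_path x y q \<and>
      (\<forall>b\<in>set q. invariant_under (stabilizer S x \<inter> stabilizer S y) b) \<and> (x = y \<longrightarrow> q = [])"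
    using paths by (metis empty_iff is_path.simps(1) list.set(1))
  then obtain q where q: "\<And>x y. is_path x y (q x y)"
    "\<And>x y. \<forall>b\<in>set (q x y). invariant_under (stabilizer S x \<inter> stabilizer S y) b"
    "\<And>x. q x x = []"
    by metis
  define rep where "rep x y = (SOME r. r \<in> pair_orbit x y)" for x y
  define tr where "tr x y = (SOME t. t \<in> S \<and> t (fst (rep x y)) = x \<and> t (snd (rep x y)) = y)"
    for x y
  define p where "p x y = map (act (tr x y)) (q (fst (rep x y)) (snd (rep x y)))" for x y
  have rep: "rep x y \<in> pair_orbit x y" for x y
    unfolding rep_def using pair_orbit_self by (rule someI)
  have tr: "tr x y \<in> S" "tr x y (fst (rep x y)) = x" "tr x y (snd (rep x y)) = y" for x y
  proof -
    have "\<exists>t. t \<in> S \<and> t (fst (rep x y)) = x \<and> t (snd (rep x y)) = y"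
      using pair_orbit_transporter[OF rep] by metis
    from someI_ex[OF this] show "tr x y \<in> S" "tr x y (fst (rep x y)) = x"
        "tr x y (snd (rep x y)) = y"
      unfolding tr_def by blast+
  qed
  have "is_path x y (p x y)" for x y
    using is_path_map_act[OF _ _ q(1)] tr[of x y]
    by (metis p_def symmetry_order_iff symmetry_bij bij_is_inj)
  moreover have "p x x = []" for x
  proof -
    obtain s where "s \<in> S" "rep x x = (s x, s x)"
      using rep[of x x] by (auto simp: pair_orbit_def)
    then show ?thesis by (simp add: p_def q(3))
  qed
  moreover have "map (act s) (p x y) = p (s x) (s y)" if s: "s \<in> S" for s x y
  proof -
    have same_rep: "rep (s x) (s y) = rep x y"
      unfolding rep_def pair_orbit_apply[OF s] ..
    show ?thesis
      unfolding p_def same_rep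
      by (rule transport_invariant_path) (use s tr[of x y] tr[of "s x" "s y"] same_rep q(2) in auto)
  qed
  ultimately show ?thesis
    unfolding covariant_path_frame_system_def by blast
qed

end

theorem proposition4p5:
  fixes perp :: "'a::order \<Rightarrow> 'a \<Rightarrow> bool" and S :: "('a \<Rightarrow> 'a) set"
  assumes "causal_poset perp" and "symmetry_group perp S"
  shows "(\<exists>p. covariant_path_frame_system S p) \<longleftrightarrow>
         (\<forall>(z::'a) a. \<exists>q. is_path a z q \<and>
             (\<forall>b\<in>set q. invariant_under (stabilizer S a \<inter> stabilizer S z) b))"
proof
  assume "\<exists>p. covariant_path_frame_system S p"
  then obtain p where "covariant_path_frame_system S p" by blast
  then show "\<forall>z a. \<exists>q. is_path a z q \<and>
      (\<forall>b\<in>set q. invariant_under (stabilizer S a \<inter> stabilizer S z) b)"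
    using covariant_path_frame_system_invariant
    by (metis covariant_path_frame_system_def)
next
  assume "\<forall>z a. \<exists>q. is_path a z q \<and>
      (\<forall>b\<in>set q. invariant_under (stabilizer S a \<inter> stabilizer S z) b)"
  then show "\<exists>p. covariant_path_frame_system S p"
    using covariant_path_frame_system_exists[OF assms(2)] by blast
qed

end
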